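(* Let $N\ge 1$, let $\lambda_1,\dots,\lambda_N>0$, let $\mathbf{D}=\mathrm{diag}(\lambda_1,\dots,\lambda_N)$, and let $\mathbf{C}$ be an $N\times N$ symmetric positive definite matrix with all diagonal entries equal to $1$. Then the eigenvalues $\hat\lambda_1,\dots,\hat\lambda_N$ of $\mathbf{A}=\mathbf{D}\mathbf{C}$ are real and positive, and the vector $\hat{\boldsymbol\lambda}=(\hat\lambda_1,\dots,\hat\lambda_N)$ majorizes $\boldsymbol\lambda=(\lambda_1,\dots,\lambda_N)$, i.e. $\hat{\boldsymbol\lambda}\succ\boldsymbol\lambda$. *)

theory Defs
  imports "Jordan_Normal_Form.Matrix" "Jordan_Normal_Form.Char_Poly"
begin

definition pos_def_mat :: "real mat \<Rightarrow> bool" where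
  "pos_def_mat C \<longleftrightarrow> square_mat C \<and> C\<^sup>T = C \<and>
     (\<forall>x \<in> carrier_vec (dim_row C). x \<noteq> 0\<^sub>v (dim_row C) \<longrightarrow> x \<bullet> (C *\<^sub>v x) > 0)"

definition majorizes :: "real list \<Rightarrow> real list \<Rightarrow> bool" where
  "majorizes x y \<longleftrightarrow> length x = length y \<and> sum_list x = sum_list y \<and>
     (\<forall>k \<le> length x. sum_list (take k (rev (sort y))) \<le> sum_list (take k (rev (sort x))))"

end

theory Submission
  imports Defs "Jordan_Normal_Form.Spectral_Radius" "HOL-Combinatorics.Permutations"
begin

text \<open>Writing \<open>R = D\<^sup>1\<^sup>/\<^sup>2\<close>, the matrix \<open>D C = R (R C R) R\<^sup>-\<^sup>1\<close> is similar to the symmetric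
  matrix \<open>S = R C R\<close>, which is positive definite by congruence. Hence the eigenvalues of \<open>D C\<close>
  are those of \<open>S\<close>: real and positive. Diagonalizing \<open>S = U diag(\<mu>) U\<^sup>T\<close> with orthogonal \<open>U\<close>
  gives \<open>\<lambda>\<^sub>i = S\<^sub>i\<^sub>i = \<Sum>\<^sub>j U\<^sub>i\<^sub>j\<^sup>2 \<mu>\<^sub>j\<close>, and the matrix \<open>(U\<^sub>i\<^sub>j\<^sup>2)\<close> is doubly stochastic;
  so \<open>\<lambda>\<close> is a doubly stochastic image of \<open>\<mu>\<close>, which makes \<open>\<mu>\<close> majorize \<open>\<lambda>\<close>
  (Schur's theorem).\<close>

section \<open>Majorization by doubly stochastic averaging\<close>

lemma sum_weighted_le_sum_prefix:
  fixes y w :: "nat \<Rightarrow> real"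
  assumes antimono: "\<And>i j. i \<le> j \<Longrightarrow> j < n \<Longrightarrow> y j \<le> y i"
    and w: "\<And>j. j < n \<Longrightarrow> 0 \<le> w j \<and> w j \<le> 1"
    and sum_w: "(\<Sum>j<n. w j) = real k" and kn: "k \<le> n"
  shows "(\<Sum>j<n. w j * y j) \<le> (\<Sum>j<k. y j)"
proof (cases "n = 0")
  case True
  thus ?thesis using kn by simp
next
  case False
  text \<open>Against the threshold \<open>c\<close>, each term of \<open>(w j - [j < k]) (y j - c)\<close> is \<open>\<le> 0\<close>,
    and both weight vectors have total \<open>k\<close>.\<close>
  define c where "c = y (min k (n - 1))"
  define e where "e = (\<lambda>j. if j < k then 1 else (0::real))"
  have sum_e: "(\<Sum>j<n. e j * z j) = (\<Sum>j<k. z j)" for z :: "nat \<Rightarrow> real"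
  proof -
    have "(\<Sum>j<n. e j * z j) = (\<Sum>j<k. e j * z j)"
      by (rule sum.mono_neutral_right, insert kn, auto simp: e_def)
    thus ?thesis by (simp add: e_def)
  qed
  have termwise: "(w j - e j) * y j \<le> (w j - e j) * c" if j: "j < n" for j
  proof (cases "j < k")
    case True
    hence "c \<le> y j" unfolding c_def using antimono j by simp
    moreover have "w j - e j \<le> 0" using w[OF j] True unfolding e_def by simp
    ultimately show ?thesis by (simp add: mult_left_mono_neg)
  next
    case False
    hence "y j \<le> c" unfolding c_def using antimono[of k j] j by simp
    moreover have "w j - e j \<ge> 0" using w[OF j] False unfolding e_def by simp
    ultimately show ?thesis by (simp add: mult_left_mono)
  qed
  have "(\<Sum>j<n. w j * y j) - (\<Sum>j<k. y j) = (\<Sum>j<n. (w j - e j) * y j)"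
    unfolding sum_e[symmetric] by (simp add: sum_subtractf left_diff_distrib)
  also have "\<dots> \<le> (\<Sum>j<n. (w j - e j) * c)" by (rule sum_mono, rule termwise, simp)
  also have "\<dots> = ((\<Sum>j<n. w j) - (\<Sum>j<n. e j)) * c"
    by (simp add: sum_distrib_right sum_subtractf left_diff_distrib)
  also have "\<dots> = 0" using sum_w sum_e[of "\<lambda>_. 1"] by simp
  finally show ?thesis by simp
qed

lemma rev_sort_nth_antimono:
  fixes xs :: "'a :: linorder list"
  assumes "i \<le> j" "j < length xs"
  shows "rev (sort xs) ! j \<le> rev (sort xs) ! i"
proof -
  have "sort xs ! (length xs - 1 - j) \<le> sort xs ! (length xs - 1 - i)"
    by (rule sorted_nth_mono, insert assms, auto)
  thus ?thesis using assms by (simp add: rev_nth)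
qed

lemma rev_sort_permutes:
  obtains p where "p permutes {..<length xs}" "\<forall>j < length xs. rev (sort xs) ! j = xs ! p j"
proof -
  have "mset (rev (sort xs)) = mset xs" by simp
  then obtain p where p: "p permutes {..<length xs}" and "permute_list p xs = rev (sort xs)"
    by (rule mset_eq_permutation)
  with permute_list_nth[OF p] show ?thesis using that[OF p] by auto
qed

lemma sum_take_eq_sum_nth: "k \<le> length ys \<Longrightarrow> sum_list (take k ys) = (\<Sum>j<k. ys ! j)"
  by (simp add: sum_list_sum_nth atLeast0LessThan min_absorb1)

lemma sum_largest_eq_sum_subset:
  fixes xs :: "real list"
  assumes k: "k \<le> length xs"
  obtains I where "I \<subseteq> {..<length xs}" "card I = k"
    "sum_list (take k (rev (sort xs))) = (\<Sum>i\<in>I. xs ! i)"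
proof -
  obtain p where p: "p permutes {..<length xs}"
    and nth: "\<forall>j < length xs. rev (sort xs) ! j = xs ! p j"
    by (rule rev_sort_permutes)
  have inj: "inj_on p {..<k}" by (rule permutes_inj_on[OF p])
  have "sum_list (take k (rev (sort xs))) = (\<Sum>j<k. xs ! p j)"
    using k nth by (simp add: sum_take_eq_sum_nth)
  also have "\<dots> = (\<Sum>i\<in>p ` {..<k}. xs ! i)" by (simp add: sum.reindex[OF inj])
  finally have eq: "sum_list (take k (rev (sort xs))) = (\<Sum>i\<in>p ` {..<k}. xs ! i)" .
  have "p ` {..<k} \<subseteq> p ` {..<length xs}" using k by (intro image_mono) auto
  hence "p ` {..<k} \<subseteq> {..<length xs}" unfolding permutes_image[OF p] .
  from that[OF this card_image[OF inj, unfolded card_lessThan] eq] show ?thesis .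
qed

lemma weighted_sum_le_sum_largest:
  fixes xs :: "real list" and w :: "nat \<Rightarrow> real"
  assumes w: "\<And>j. j < length xs \<Longrightarrow> 0 \<le> w j \<and> w j \<le> 1"
    and sum_w: "(\<Sum>j<length xs. w j) = real k" and kn: "k \<le> length xs"
  shows "(\<Sum>j<length xs. w j * xs ! j) \<le> sum_list (take k (rev (sort xs)))"
proof -
  let ?n = "length xs"
  obtain p where p: "p permutes {..<?n}" and nth: "\<forall>j < ?n. rev (sort xs) ! j = xs ! p j"
    by (rule rev_sort_permutes)
  have reindex: "(\<Sum>j<?n. f j) = (\<Sum>j<?n. f (p j))" for f :: "nat \<Rightarrow> real"
    using sum.reindex_bij_betw[OF permutes_imp_bij[OF p], of f] by simp
  have "(\<Sum>j<?n. w j * xs ! j) = (\<Sum>j<?n. w (p j) * rev (sort xs) ! j)"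
    using reindex[of "\<lambda>j. w j * xs ! j"] by (simp add: nth)
  also have "\<dots> \<le> (\<Sum>j<k. rev (sort xs) ! j)"
  proof (rule sum_weighted_le_sum_prefix[OF rev_sort_nth_antimono _ _ kn])
    show "\<And>j. j < ?n \<Longrightarrow> 0 \<le> w (p j) \<and> w (p j) \<le> 1"
      using w permutes_in_image[OF p] by auto
    show "(\<Sum>j<?n. w (p j)) = real k" using reindex[of w] sum_w by simp
  qed
  also have "\<dots> = sum_list (take k (rev (sort xs)))" using kn by (simp add: sum_take_eq_sum_nth)
  finally show ?thesis .
qed

lemma majorizes_doubly_stochastic:
  fixes P :: "nat \<Rightarrow> nat \<Rightarrow> real" and x y :: "real list"
  assumes len: "length x = n" "length y = n"
    and nonneg: "\<And>i j. i < n \<Longrightarrow> j < n \<Longrightarrow> 0 \<le> P i j"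
    and rows: "\<And>i. i < n \<Longrightarrow> (\<Sum>j<n. P i j) = 1"
    and cols: "\<And>j. j < n \<Longrightarrow> (\<Sum>i<n. P i j) = 1"
    and x: "\<And>i. i < n \<Longrightarrow> x ! i = (\<Sum>j<n. P i j * y ! j)"
  shows "majorizes y x"
proof -
  have "sum_list x = (\<Sum>i<n. \<Sum>j<n. P i j * y ! j)"
    using len x by (simp add: sum_list_sum_nth atLeast0LessThan)
  also have "\<dots> = (\<Sum>j<n. (\<Sum>i<n. P i j) * y ! j)"
    by (subst sum.swap, simp add: sum_distrib_right)
  also have "\<dots> = sum_list y" using cols len by (simp add: sum_list_sum_nth atLeast0LessThan)
  finally have sum_eq: "sum_list y = sum_list x" by simp
  have "sum_list (take k (rev (sort x))) \<le> sum_list (take k (rev (sort y)))" if k: "k \<le> n" for k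
  proof -
    obtain I where I: "I \<subseteq> {..<n}" and card_I: "card I = k"
      and largest_x: "sum_list (take k (rev (sort x))) = (\<Sum>i\<in>I. x ! i)"
      using sum_largest_eq_sum_subset[of k x] k len by auto
    define w where "w j = (\<Sum>i\<in>I. P i j)" for j
    have w: "0 \<le> w j \<and> w j \<le> 1" if j: "j < length y" for j
    proof
      show "0 \<le> w j" unfolding w_def using I j len nonneg by (intro sum_nonneg) auto
      have "w j \<le> (\<Sum>i<n. P i j)" unfolding w_def
        using I j len nonneg by (intro sum_mono2) auto
      thus "w j \<le> 1" using cols[of j] j len by simp
    qed
    have "(\<Sum>j<n. w j) = (\<Sum>i\<in>I. \<Sum>j<n. P i j)" unfolding w_def by (rule sum.swap)
    also have "\<dots> = (\<Sum>i\<in>I. 1)" using I rows by (intro sum.cong) auto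
    also have "\<dots> = real k" using card_I by simp
    finally have sum_w: "(\<Sum>j<length y. w j) = real k" using len by simp
    have "(\<Sum>i\<in>I. x ! i) = (\<Sum>i\<in>I. \<Sum>j<n. P i j * y ! j)"
      using I x by (intro sum.cong) auto
    also have "\<dots> = (\<Sum>j<length y. w j * y ! j)" unfolding w_def
      using len by (subst sum.swap, simp add: sum_distrib_right)
    also have "\<dots> \<le> sum_list (take k (rev (sort y)))"
      using weighted_sum_le_sum_largest[OF w sum_w] k len by simp
    finally show ?thesis unfolding largest_x .
  qed
  thus ?thesis unfolding majorizes_def using len sum_eq by auto
qed

section \<open>Orthogonal diagonalization of real symmetric matrices\<close>

lemma transpose_mult_mult_index:
  assumes X: "X \<in> carrier_mat n n" and C: "C \<in> carrier_mat n n" and Y: "Y \<in> carrier_mat n n"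
    and i: "i < n" and j: "j < n"
  shows "(X\<^sup>T * C * Y) $$ (i, j) = col X i \<bullet> (C *\<^sub>v col Y j)"
proof -
  have "X\<^sup>T * C * Y = X\<^sup>T * (C * Y)" using X C Y by (simp add: assoc_mult_mat[of _ n n _ n _ n])
  thus ?thesis using X C Y i j by (simp flip: col_mult2)
qed

lemma transpose_congruence_symmetric:
  fixes S :: "'a :: comm_semiring_0 mat"
  assumes S: "S \<in> carrier_mat n n" and sym: "S\<^sup>T = S" and W: "W \<in> carrier_mat n m"
  shows "(W\<^sup>T * S * W)\<^sup>T = W\<^sup>T * S * W"
proof -
  have WS: "W\<^sup>T * S \<in> carrier_mat m n" using S W by simp
  have "(W\<^sup>T * S * W)\<^sup>T = W\<^sup>T * (W\<^sup>T * S)\<^sup>T" using transpose_mult[OF WS W] by simp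
  also have "(W\<^sup>T * S)\<^sup>T = S\<^sup>T * W" using transpose_mult[of "W\<^sup>T" m n S n] S W by simp
  also have "W\<^sup>T * (S\<^sup>T * W) = W\<^sup>T * S * W" unfolding sym
    using assoc_mult_mat[of "W\<^sup>T" m n S n W m] S W by simp
  finally show ?thesis .
qed

lemma real_symmetric_eigenvalue_real:
  fixes S :: "real mat"
  assumes S: "S \<in> carrier_mat n n" and sym: "S\<^sup>T = S"
    and ev: "eigenvalue (map_mat complex_of_real S) z"
  shows "z = of_real (Re z)"
proof -
  let ?Sc = "map_mat complex_of_real S"
  obtain v where v: "v \<in> carrier_vec n" and v0: "v \<noteq> 0\<^sub>v n" and eq: "?Sc *\<^sub>v v = z \<cdot>\<^sub>v v"
    using ev S unfolding eigenvalue_def eigenvector_def by auto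
  text \<open>The Hermitian form \<open>q = v\<^sup>* S v\<close> is real and equals \<open>z |v|\<^sup>2\<close>.\<close>
  define q where "q = (\<Sum>i<n. \<Sum>j<n. cnj (v $ i) * of_real (S $$ (i, j)) * v $ j)"
  define r where "r = (\<Sum>i<n. (cmod (v $ i))\<^sup>2)"
  have q_eq: "q = z * of_real r"
  proof -
    have "q = (\<Sum>i<n. cnj (v $ i) * (?Sc *\<^sub>v v) $ i)"
      unfolding q_def using S v
      by (auto simp: mult_mat_vec_def scalar_prod_def sum_distrib_left mult.assoc
          atLeast0LessThan intro!: sum.cong)
    also have "\<dots> = z * (\<Sum>i<n. cnj (v $ i) * v $ i)"
      using eq v by (simp add: sum_distrib_left algebra_simps)
    also have "(\<Sum>i<n. cnj (v $ i) * v $ i) = of_real r"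
      unfolding r_def of_real_sum complex_norm_square by (simp add: mult.commute)
    finally show ?thesis .
  qed
  have sym_entries: "S $$ (j, i) = S $$ (i, j)" if "i < n" "j < n" for i j
    using sym S that by (metis carrier_matD index_transpose_mat(1))
  have "cnj q = (\<Sum>i<n. \<Sum>j<n. v $ i * of_real (S $$ (i, j)) * cnj (v $ j))"
    unfolding q_def by simp
  also have "\<dots> = (\<Sum>j<n. \<Sum>i<n. v $ i * of_real (S $$ (i, j)) * cnj (v $ j))"
    by (rule sum.swap)
  also have "\<dots> = q" unfolding q_def
    by (intro sum.cong refl) (simp add: sym_entries mult.commute mult.left_commute)
  finally have q_real: "cnj q = q" .
  obtain i where i: "i < n" "v $ i \<noteq> 0" using v v0 by (metis eq_vecI carrier_vecD index_zero_vec)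
  have "(cmod (v $ i))\<^sup>2 \<le> r" unfolding r_def using i by (intro member_le_sum) auto
  moreover have "(cmod (v $ i))\<^sup>2 > 0" using i by simp
  ultimately have "r > 0" by linarith
  hence "cnj z = z" using q_eq q_real by (metis complex_cnj_complex_of_real complex_cnj_mult
      mult_cancel_right of_real_eq_0_iff less_irrefl)
  thus ?thesis by (metis Reals_cnj_iff of_real_Re)
qed

lemma real_symmetric_unit_eigenvector:
  fixes S :: "real mat"
  assumes S: "S \<in> carrier_mat n n" and sym: "S\<^sup>T = S" and n: "n > 0"
  obtains v e where "v \<in> carrier_vec n" "v \<bullet> v = 1" "S *\<^sub>v v = e \<cdot>\<^sub>v v"
proof -
  let ?Sc = "map_mat complex_of_real S"
  have Sc: "?Sc \<in> carrier_mat n n" using S by simp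
  obtain z where z: "eigenvalue ?Sc z"
    using spectrum_non_empty[OF Sc n] unfolding spectrum_def by auto
  have "poly (map_poly complex_of_real (char_poly S)) (of_real (Re z)) = 0"
    using z real_symmetric_eigenvalue_real[OF S sym z] eigenvalue_root_char_poly[OF Sc]
      of_real_hom.char_poly_hom[OF S] by metis
  hence "poly (char_poly S) (Re z) = 0" by (metis of_real_eq_0_iff of_real_hom.poly_map_poly)
  then obtain w where w: "w \<in> carrier_vec n" and w0: "w \<noteq> 0\<^sub>v n" and ev: "S *\<^sub>v w = Re z \<cdot>\<^sub>v w"
    using eigenvalue_root_char_poly[OF S] S unfolding eigenvalue_def eigenvector_def by auto
  have ww: "w \<bullet> w > 0" using conjugate_square_greater_0_vec[OF w] w0 by simp
  define v where "v = (1 / sqrt (w \<bullet> w)) \<cdot>\<^sub>v w"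
  have "v \<bullet> v = (1 / sqrt (w \<bullet> w))\<^sup>2 * (w \<bullet> w)" unfolding v_def using w
    by (simp add: power2_eq_square)
  also have "\<dots> = 1" using ww by (simp add: power_divide)
  finally have "v \<bullet> v = 1" .
  moreover have "S *\<^sub>v v = Re z \<cdot>\<^sub>v v" unfolding v_def using w S ev
    by (simp add: mult_mat_vec smult_smult_assoc mult.commute)
  moreover have "v \<in> carrier_vec n" unfolding v_def using w by simp
  ultimately show ?thesis using that by blast
qed

lemma orthonormal_completion:
  fixes v :: "real vec"
  assumes v: "v \<in> carrier_vec n" and vv: "v \<bullet> v = 1"
  obtains W where "W \<in> carrier_mat n n" "W\<^sup>T * W = 1\<^sub>m n" "col W 0 = v"
proof -
  interpret cof_vec_space n "TYPE(real)" .
  have v0: "v \<noteq> 0\<^sub>v n" using vv v by auto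
  have n: "n > 0" using v vv unfolding scalar_prod_def by (cases n) auto
  define b where "b = basis_completion v"
  define ws where "ws = gram_schmidt n b"
  from basis_completion[OF v v0, folded b_def]
  have dist_b: "distinct b" and indep: "\<not> lin_dep (set b)" and b: "set b \<subseteq> carrier_vec n"
    and hd_b: "hd b = v" and len_b: "length b = n" by auto
  from hd_b len_b n obtain vs where b_Cons: "b = v # vs" by (cases b) auto
  from gram_schmidt_result[OF b dist_b indep refl, folded ws_def]
  have ws: "set ws \<subseteq> carrier_vec n" and orth: "corthogonal ws" and len_ws: "length ws = n"
    by (auto simp: len_b)
  from gram_schmidt_hd[OF v, of vs, folded b_Cons] have "hd ws = v" unfolding ws_def .
  hence ws_0: "ws ! 0 = v" using n len_ws by (cases ws) auto
  have ws_carrier: "ws ! i \<in> carrier_vec n" if "i < n" for i using ws len_ws that by auto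
  have ws_orth: "ws ! i \<bullet> ws ! j = 0 \<longleftrightarrow> i \<noteq> j" if "i < n" "j < n" for i j
    using orth len_ws that unfolding corthogonal_def by simp
  define us where "us = map (\<lambda>w. (1 / sqrt (w \<bullet> w)) \<cdot>\<^sub>v w) ws"
  have len_us: "length us = n" unfolding us_def using len_ws by simp
  have us_carrier: "us ! i \<in> carrier_vec n" if "i < n" for i
    unfolding us_def using ws_carrier that len_ws by simp
  have us_orthonormal: "us ! i \<bullet> us ! j = (if i = j then 1 else 0)" if i: "i < n" and j: "j < n" for i j
  proof -
    have "us ! i \<bullet> us ! j
        = (1 / sqrt (ws ! i \<bullet> ws ! i)) * (1 / sqrt (ws ! j \<bullet> ws ! j)) * (ws ! i \<bullet> ws ! j)"
      unfolding us_def using i j len_ws ws_carrier[OF i] ws_carrier[OF j] by simp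
    moreover have "ws ! i \<bullet> ws ! i > 0"
      using ws_orth[OF i i] conjugate_square_ge_0_vec[of "ws ! i"] by (simp add: less_le)
    ultimately show ?thesis using ws_orth[OF i j] by (cases "i = j") (auto simp: real_sqrt_mult[symmetric])
  qed
  define W where "W = mat_of_cols n us"
  have W: "W \<in> carrier_mat n n" unfolding W_def using mat_of_cols_carrier(1)[of n us] len_us by simp
  moreover have "W\<^sup>T * W = 1\<^sub>m n"
    by (rule eq_matI) (use W us_orthonormal len_us us_carrier in \<open>auto simp: W_def\<close>)
  moreover have "col W 0 = v"
    unfolding W_def us_def using n len_ws len_us us_carrier[OF n] ws_0 vv
    by (simp add: us_def)
  ultimately show ?thesis by (rule that)
qed

lemma real_symmetric_deflation:
  fixes S :: "real mat"
  assumes S: "S \<in> carrier_mat (Suc m) (Suc m)" and sym: "S\<^sup>T = S"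
  obtains W e S' where "W \<in> carrier_mat (Suc m) (Suc m)" "W\<^sup>T * W = 1\<^sub>m (Suc m)"
    "S' \<in> carrier_mat m m" "S'\<^sup>T = S'"
    "W\<^sup>T * S * W = four_block_mat (mat 1 1 (\<lambda>_. e)) (0\<^sub>m 1 m) (0\<^sub>m m 1) S'"
proof -
  let ?n = "Suc m"
  obtain v e where v: "v \<in> carrier_vec ?n" and vv: "v \<bullet> v = 1" and ev: "S *\<^sub>v v = e \<cdot>\<^sub>v v"
    using real_symmetric_unit_eigenvector[OF S sym] by auto
  obtain W where W: "W \<in> carrier_mat ?n ?n" and orth: "W\<^sup>T * W = 1\<^sub>m ?n" and W_0: "col W 0 = v"
    using orthonormal_completion[OF v vv] by auto
  define M where "M = W\<^sup>T * S * W"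
  have M: "M \<in> carrier_mat ?n ?n" unfolding M_def using W S by auto
  have M_sym: "M\<^sup>T = M" unfolding M_def by (rule transpose_congruence_symmetric[OF S sym W])
  have M_col: "M $$ (i, 0) = (if i = 0 then e else 0)" if i: "i < ?n" for i
  proof -
    have "M $$ (i, 0) = col W i \<bullet> (S *\<^sub>v v)"
      using transpose_mult_mult_index[OF W S W i zero_less_Suc] W_0 unfolding M_def by simp
    also have "\<dots> = e * (W\<^sup>T * W) $$ (i, 0)" using ev W_0 W v i by simp
    finally show ?thesis unfolding orth using i by simp
  qed
  have M_row: "M $$ (0, j) = (if j = 0 then e else 0)" if j: "j < ?n" for j
    using M_col[OF j] M_sym M j by (metis carrier_matD index_transpose_mat(1) zero_less_Suc)
  define S' where "S' = mat m m (\<lambda>(i, j). M $$ (Suc i, Suc j))"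
  have S': "S' \<in> carrier_mat m m" unfolding S'_def by simp
  have S'_sym: "S'\<^sup>T = S'" unfolding S'_def
    by (rule eq_matI) (use M_sym M in \<open>auto, metis carrier_matD index_transpose_mat(1) Suc_less_eq\<close>)
  have "M = four_block_mat (mat 1 1 (\<lambda>_. e)) (0\<^sub>m 1 m) (0\<^sub>m m 1) S'"
    by (rule eq_matI) (use M M_col M_row in \<open>auto simp: S'_def\<close>)
  thus ?thesis using that[OF W orth S' S'_sym] unfolding M_def by blast
qed

theorem real_symmetric_orthogonal_diagonalization:
  fixes S :: "real mat"
  assumes "S \<in> carrier_mat n n" and "S\<^sup>T = S"
  obtains U f where "U \<in> carrier_mat n n" "U\<^sup>T * U = 1\<^sub>m n" "U\<^sup>T * S * U = mat_diag n f"
  using assms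
proof (induction n arbitrary: S thesis)
  case 0
  show ?case
    by (rule "0.prems"(1)[of "1\<^sub>m 0" "\<lambda>_. 0"])
      (use "0.prems"(2) in \<open>auto intro!: eq_matI simp: mat_diag_def\<close>)
next
  case (Suc m S)
  let ?n = "Suc m"
  obtain W e S' where W: "W \<in> carrier_mat ?n ?n" and W_orth: "W\<^sup>T * W = 1\<^sub>m ?n"
    and S': "S' \<in> carrier_mat m m" "S'\<^sup>T = S'"
    and deflate: "W\<^sup>T * S * W = four_block_mat (mat 1 1 (\<lambda>_. e)) (0\<^sub>m 1 m) (0\<^sub>m m 1) S'"
    by (rule real_symmetric_deflation[OF Suc.prems(2,3)])
  obtain U' f where U': "U' \<in> carrier_mat m m" and U'_orth: "U'\<^sup>T * U' = 1\<^sub>m m"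
    and diag': "U'\<^sup>T * S' * U' = mat_diag m f"
    using Suc.IH[OF _ S'] by auto
  define B where "B = four_block_mat (1\<^sub>m 1) (0\<^sub>m 1 m) (0\<^sub>m m 1) U'"
  have B: "B \<in> carrier_mat ?n ?n" using U' unfolding B_def carrier_mat_def by simp
  have U't: "U'\<^sup>T \<in> carrier_mat m m" using U' by simp
  have Bt: "B\<^sup>T = four_block_mat (1\<^sub>m 1) (0\<^sub>m 1 m) (0\<^sub>m m 1) U'\<^sup>T"
    unfolding B_def using U' by (simp add: transpose_four_block_mat[of _ 1 1 _ m _ m])
  have E: "mat 1 1 (\<lambda>_. e) \<in> carrier_mat 1 1" and I1: "1\<^sub>m 1 \<in> carrier_mat 1 1"
    and Z1: "0\<^sub>m 1 m \<in> carrier_mat 1 m" and Z2: "0\<^sub>m m 1 \<in> carrier_mat m 1" by simp_all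
  define U where "U = W * B"
  have U: "U \<in> carrier_mat ?n ?n" unfolding U_def using W B by simp
  have Ut: "U\<^sup>T = B\<^sup>T * W\<^sup>T" unfolding U_def using W B by (simp add: transpose_mult)
  have "U\<^sup>T * U = B\<^sup>T * (W\<^sup>T * W) * B" unfolding Ut unfolding U_def using W B
    by (simp add: assoc_mult_mat[of _ ?n ?n _ ?n _ ?n])
  also have "\<dots> = B\<^sup>T * B" unfolding W_orth using B by simp
  also have "\<dots> = 1\<^sub>m ?n" unfolding Bt unfolding B_def
    using mult_four_block_mat[OF I1 Z1 Z2 U't I1 Z1 Z2 U'] U' U't U'_orth by simp
  finally have U_orth: "U\<^sup>T * U = 1\<^sub>m ?n" .
  have "U\<^sup>T * S * U = B\<^sup>T * (W\<^sup>T * S * W) * B" unfolding Ut unfolding U_def using W B Suc.prems(2)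
    by (simp add: assoc_mult_mat[of _ ?n ?n _ ?n _ ?n])
  also have "\<dots> = four_block_mat (mat 1 1 (\<lambda>_. e)) (0\<^sub>m 1 m) (0\<^sub>m m 1) (U'\<^sup>T * S' * U')"
    unfolding deflate Bt unfolding B_def using U' U't S' E
      mult_four_block_mat[OF I1 Z1 Z2 U't E Z1 Z2 S'(1)]
      mult_four_block_mat[OF E Z1 Z2 mult_carrier_mat[OF U't S'(1)] I1 Z1 Z2 U']
    by (simp add: assoc_mult_mat[of _ m m _ m _ m])
  also have "\<dots> = mat_diag ?n (case_nat e f)" unfolding diag'
    by (rule eq_matI) (auto simp: mat_diag_def split: nat.split)
  finally show ?case using Suc.prems(1)[OF U U_orth] by blast
qed

section \<open>Diagonal matrices, similarity and congruence\<close>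

lemma mk_diagonal_eq_mat_diag: "mk_diagonal xs = mat_diag (length xs) (\<lambda>i. xs ! i)"
proof (induction xs)
  case Nil
  show ?case by (rule eq_matI) (auto simp: mk_diagonal_def mat_diag_def)
next
  case (Cons a xs)
  have "mk_diagonal (a # xs)
      = four_block_mat (mat 1 1 (\<lambda>_. a)) (0\<^sub>m 1 (length xs)) (0\<^sub>m (length xs) 1) (mk_diagonal xs)"
    using mk_diagonal_dim[of xs] unfolding mk_diagonal_def by (simp add: Let_def)
  also have "\<dots> = mat_diag (length (a # xs)) (\<lambda>i. (a # xs) ! i)"
    unfolding Cons.IH by (rule eq_matI) (auto simp: mat_diag_def nth_Cons')
  finally show ?case .
qed

lemma transpose_mat_diag [simp]: "(mat_diag n f)\<^sup>T = mat_diag n f"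
  by (rule eq_matI) (auto simp: mat_diag_def)

lemma char_poly_mat_diag: "char_poly (mat_diag n f) = (\<Prod>a \<leftarrow> map f [0..<n]. [:- a, 1:])"
proof -
  have "upper_triangular (mat_diag n f)" unfolding mat_diag_def upper_triangular_def by auto
  hence "char_poly (mat_diag n f) = (\<Prod>a \<leftarrow> diag_mat (mat_diag n f). [:- a, 1:])"
    by (rule char_poly_upper_triangular[OF mat_diag_dim])
  also have "diag_mat (mat_diag n f) = map f [0..<n]"
    unfolding diag_mat_def mat_diag_def by (rule nth_equalityI) auto
  finally show ?thesis .
qed

lemma mat_diag_inverse:
  assumes "\<And>i. i < n \<Longrightarrow> f i * g i = 1"
  shows "mat_diag n f * mat_diag n g = 1\<^sub>m n"
  by (simp, rule eq_matI) (auto simp: mat_diag_def assms)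

lemma char_poly_orthogonal_congruence:
  fixes S U :: "'a :: field mat"
  assumes S: "S \<in> carrier_mat n n" and U: "U \<in> carrier_mat n n" and orth: "U\<^sup>T * U = 1\<^sub>m n"
  shows "char_poly (U\<^sup>T * S * U) = char_poly S"
proof -
  have Ut: "U\<^sup>T \<in> carrier_mat n n" using U by simp
  have orth': "U * U\<^sup>T = 1\<^sub>m n" using mat_mult_left_right_inverse[OF Ut U orth] .
  have "U * (U\<^sup>T * S * U) * U\<^sup>T = (U * U\<^sup>T) * S * (U * U\<^sup>T)"
    using U S by (simp add: assoc_mult_mat[of _ n n _ n _ n])
  hence "S = U * (U\<^sup>T * S * U) * U\<^sup>T" unfolding orth' using S by simp
  hence "similar_mat S (U\<^sup>T * S * U)"
    by (intro similar_matI[of _ _ U "U\<^sup>T" n]) (use U Ut S orth orth' in auto)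
  thus ?thesis by (rule char_poly_similar[symmetric])
qed

lemma char_poly_map_of_real:
  fixes A :: "real mat"
  assumes A: "A \<in> carrier_mat n n" and split: "char_poly A = (\<Prod>a \<leftarrow> mu. [:- a, 1:])"
  shows "char_poly (map_mat complex_of_real A) = (\<Prod>a \<leftarrow> mu. [:- complex_of_real a, 1:])"
proof -
  interpret of_real_poly: map_poly_comm_ring_hom complex_of_real ..
  show ?thesis unfolding of_real_hom.char_poly_hom[OF A] split
    by (simp add: of_real_poly.hom_prod_list comp_def)
qed

lemma pos_def_mat_congruence:
  fixes C V W :: "real mat"
  assumes C: "C \<in> carrier_mat n n" and pd: "pos_def_mat C"
    and V: "V \<in> carrier_mat n n" and W: "W \<in> carrier_mat n n" and inv: "W * V = 1\<^sub>m n"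
  shows "pos_def_mat (V\<^sup>T * C * V)"
proof -
  have sym: "C\<^sup>T = C" and pos: "\<And>y. y \<in> carrier_vec n \<Longrightarrow> y \<noteq> 0\<^sub>v n \<Longrightarrow> y \<bullet> (C *\<^sub>v y) > 0"
    using pd C unfolding pos_def_mat_def by auto
  have "x \<bullet> ((V\<^sup>T * C * V) *\<^sub>v x) > 0" if x: "x \<in> carrier_vec n" "x \<noteq> 0\<^sub>v n" for x
  proof -
    have Vx: "V *\<^sub>v x \<in> carrier_vec n" using V x by simp
    have recover: "W *\<^sub>v (V *\<^sub>v x) = x" using W V x inv by (simp flip: assoc_mult_mat_vec)
    have "V *\<^sub>v x \<noteq> 0\<^sub>v n"
    proof
      assume "V *\<^sub>v x = 0\<^sub>v n"
      hence "x = W *\<^sub>v 0\<^sub>v n" using recover by simp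
      also have "\<dots> = 0\<^sub>v n" using W by auto
      finally show False using x by simp
    qed
    hence "0 < (V *\<^sub>v x) \<bullet> (C *\<^sub>v (V *\<^sub>v x))" using pos Vx by blast
    also have "\<dots> = (V\<^sup>T *\<^sub>v (C *\<^sub>v (V *\<^sub>v x))) \<bullet> x"
      using transpose_vec_mult_scalar[OF V x(1), of "C *\<^sub>v (V *\<^sub>v x)"] C Vx
      by (simp add: comm_scalar_prod[of _ n])
    also have "\<dots> = x \<bullet> ((V\<^sup>T * C * V) *\<^sub>v x)"
      using V C x by (simp add: comm_scalar_prod[of _ n] assoc_mult_mat_vec[of _ n n _ n])
    finally show ?thesis .
  qed
  thus ?thesis unfolding pos_def_mat_def
    using transpose_congruence_symmetric[OF C sym V] C V by auto
qed

lemma pos_def_mat_diag_pos: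
  assumes A: "A \<in> carrier_mat n n" and pd: "pos_def_mat A" and i: "i < n"
  shows "A $$ (i, i) > 0"
proof -
  have "unit_vec n i \<noteq> 0\<^sub>v n"
  proof
    assume "unit_vec n i = 0\<^sub>v n"
    from arg_cong[OF this, of "\<lambda>v. v $ i"] show False using i by simp
  qed
  hence "0 < unit_vec n i \<bullet> (A *\<^sub>v unit_vec n i)"
    using pd A unfolding pos_def_mat_def by auto
  also have "\<dots> = A $$ (i, i)" using A i by simp
  finally show ?thesis .
qed

lemma sqrt_diag_symmetrization:
  fixes d :: "nat \<Rightarrow> real" and C :: "real mat"
  assumes pos: "\<And>i. i < n \<Longrightarrow> d i > 0" and C: "C \<in> carrier_mat n n" and pd: "pos_def_mat C"
  defines "R \<equiv> mat_diag n (\<lambda>i. sqrt (d i))"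
  shows "similar_mat (mat_diag n d * C) (R * C * R)"
    and "pos_def_mat (R * C * R)"
    and "\<And>i. i < n \<Longrightarrow> (R * C * R) $$ (i, i) = d i * C $$ (i, i)"
proof -
  define R' where "R' = mat_diag n (\<lambda>i. 1 / sqrt (d i))"
  have R: "R \<in> carrier_mat n n" and R': "R' \<in> carrier_mat n n" unfolding R_def R'_def by simp_all
  have nz: "d i \<noteq> 0" if "i < n" for i using pos[OF that] by simp
  have RR': "R * R' = 1\<^sub>m n" unfolding R_def R'_def by (rule mat_diag_inverse) (simp add: nz)
  have R'R: "R' * R = 1\<^sub>m n" unfolding R_def R'_def by (rule mat_diag_inverse) (simp add: nz)
  have RR: "R * R = mat_diag n d" unfolding R_def mat_diag_diag
    by (rule eq_matI) (auto simp: mat_diag_def pos less_imp_le)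
  have "R * (R * C * R) * R' = (R * R) * C * (R * R')"
    using R R' C by (simp add: assoc_mult_mat[of _ n n _ n _ n])
  hence "mat_diag n d * C = R * (R * C * R) * R'" unfolding RR RR' using C by simp
  thus "similar_mat (mat_diag n d * C) (R * C * R)"
    by (intro similar_matI[of _ _ R R' n]) (use R R' C RR' R'R in auto)
  have "R\<^sup>T = R" unfolding R_def by simp
  thus "pos_def_mat (R * C * R)" using pos_def_mat_congruence[OF C pd R R' R'R] by simp
  show "(R * C * R) $$ (i, i) = d i * C $$ (i, i)" if i: "i < n" for i
    unfolding R_def mat_diag_mult_left[OF C] mat_diag_mult_right[OF mat_carrier]
    using i pos[OF i] by simp
qed

section \<open>Eigenvalues majorize the diagonal\<close>

theorem diagonal_majorized_by_eigenvalues: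
  fixes S U :: "real mat"
  assumes S: "S \<in> carrier_mat n n" and U: "U \<in> carrier_mat n n"
    and orth: "U\<^sup>T * U = 1\<^sub>m n" and diag: "U\<^sup>T * S * U = mat_diag n f"
  shows "majorizes (map f [0..<n]) (map (\<lambda>i. S $$ (i, i)) [0..<n])"
proof (rule majorizes_doubly_stochastic[where P = "\<lambda>i j. (U $$ (i, j))\<^sup>2"])
  have Ut: "U\<^sup>T \<in> carrier_mat n n" using U by simp
  have orth': "U * U\<^sup>T = 1\<^sub>m n" using mat_mult_left_right_inverse[OF Ut U orth] .
  have "U * mat_diag n f * U\<^sup>T = (U * U\<^sup>T) * S * (U * U\<^sup>T)"
    unfolding diag[symmetric] using U S by (simp add: assoc_mult_mat[of _ n n _ n _ n])
  hence S_eq: "S = U * mat_diag n f * U\<^sup>T" unfolding orth' using S by simp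
  show "map (\<lambda>i. S $$ (i, i)) [0..<n] ! i = (\<Sum>j<n. (U $$ (i, j))\<^sup>2 * map f [0..<n] ! j)"
    if i: "i < n" for i
    using U i unfolding S_eq mat_diag_mult_right[OF U]
    by (simp add: scalar_prod_def power2_eq_square atLeast0LessThan algebra_simps)
  show "(\<Sum>j<n. (U $$ (i, j))\<^sup>2) = 1" if i: "i < n" for i
    using arg_cong[OF orth', of "\<lambda>M. M $$ (i, i)"] U i
    by (simp add: scalar_prod_def power2_eq_square atLeast0LessThan)
  show "(\<Sum>i<n. (U $$ (i, j))\<^sup>2) = 1" if j: "j < n" for j
    using arg_cong[OF orth, of "\<lambda>M. M $$ (j, j)"] U j
    by (simp add: scalar_prod_def power2_eq_square atLeast0LessThan)
qed simp_all

theorem pos_def_mat_eigenvalues_majorize_diagonal: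
  fixes S :: "real mat"
  assumes S: "S \<in> carrier_mat n n" and pd: "pos_def_mat S"
  obtains mu where "length mu = n" "char_poly S = (\<Prod>a \<leftarrow> mu. [:- a, 1:])"
    "\<forall>a \<in> set mu. a > 0" "majorizes mu (map (\<lambda>i. S $$ (i, i)) [0..<n])"
proof -
  have "S\<^sup>T = S" using pd unfolding pos_def_mat_def by simp
  then obtain U f where U: "U \<in> carrier_mat n n" and orth: "U\<^sup>T * U = 1\<^sub>m n"
    and diag: "U\<^sup>T * S * U = mat_diag n f"
    using real_symmetric_orthogonal_diagonalization[OF S] by blast
  have "char_poly S = (\<Prod>a \<leftarrow> map f [0..<n]. [:- a, 1:])"
    unfolding char_poly_orthogonal_congruence[OF S U orth, symmetric] diag
    by (rule char_poly_mat_diag)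
  moreover have "\<forall>a \<in> set (map f [0..<n]). a > 0"
  proof -
    have "pos_def_mat (mat_diag n f)" unfolding diag[symmetric]
      by (rule pos_def_mat_congruence[OF S pd U _ orth]) (use U in simp)
    thus ?thesis using pos_def_mat_diag_pos[of "mat_diag n f" n] by (auto simp: mat_diag_def)
  qed
  ultimately show ?thesis
    using that[of "map f [0..<n]"] diagonal_majorized_by_eigenvalues[OF S U orth diag] by simp
qed

theorem mainTheorem1:
  fixes lam :: "real list" and C :: "real mat" and N :: nat
  assumes "N \<ge> 1"
    and "length lam = N"
    and "\<forall>l \<in> set lam. l > 0"
    and "C \<in> carrier_mat N N"
    and "pos_def_mat C"
    and "\<forall>i < N. C $$ (i, i) = 1"
  shows "\<exists>mu :: real list. length mu = N \<and>
           char_poly (map_mat complex_of_real (mk_diagonal lam * C))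
             = (\<Prod>a \<leftarrow> mu. [:- complex_of_real a, 1:]) \<and>
           (\<forall>a \<in> set mu. a > 0) \<and>
           majorizes mu lam"
proof -
  note len = assms(2) and C = assms(4)
  have pos: "\<And>i. i < N \<Longrightarrow> lam ! i > 0" using assms(2,3) by auto
  define R where "R = mat_diag N (\<lambda>i. sqrt (lam ! i))"
  note symmetrization = sqrt_diag_symmetrization[of N "\<lambda>i. lam ! i", OF pos C assms(5), folded R_def]
  have "R \<in> carrier_mat N N" unfolding R_def by simp
  hence S: "R * C * R \<in> carrier_mat N N" using C by simp
  obtain mu where len_mu: "length mu = N" and split: "char_poly (R * C * R) = (\<Prod>a \<leftarrow> mu. [:- a, 1:])"
    and mu_pos: "\<forall>a \<in> set mu. a > 0" and major: "majorizes mu (map (\<lambda>i. (R * C * R) $$ (i, i)) [0..<N])"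
    by (rule pos_def_mat_eigenvalues_majorize_diagonal[OF S symmetrization(2)])
  have "map (\<lambda>i. (R * C * R) $$ (i, i)) [0..<N] = lam"
    using symmetrization(3) assms(6) len by (intro nth_equalityI) auto
  with major have "majorizes mu lam" by simp
  moreover have "char_poly (mk_diagonal lam * C) = (\<Prod>a \<leftarrow> mu. [:- a, 1:])"
    using char_poly_similar[OF symmetrization(1)] split unfolding mk_diagonal_eq_mat_diag len by simp
  hence "char_poly (map_mat complex_of_real (mk_diagonal lam * C))
      = (\<Prod>a \<leftarrow> mu. [:- complex_of_real a, 1:])"
    by (rule char_poly_map_of_real[rotated]) (use C len mk_diagonal_dim[of lam] in auto)
  ultimately show ?thesis using len_mu mu_pos by blast
qed

end
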